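(* Let $P$ be a closed process of the Value-Passing Quality Calculus in which variables and names are bound exactly once, and let $l$ be a label. For any input variable $x$ in $P$, there exists exactly one formula $\varphi \Rightarrow \bar{x}$ in the translation $P^l_{\Rightarrow}$, and $\bar{x}$ does not occur in $\varphi$.
   Context: Syntax: $P ::= \mathsf{0} \mid (\nu c)P \mid P_1 \mid P_2 \mid {^l}b.P \mid {^l}\bar{c}\langle t\rangle.P \mid\ !P \mid {^l}\mathsf{case}\ x\ \mathsf{of}\ \mathsf{some}(y): P_1\ \mathsf{else}\ P_2$; binders $b ::= c?x \mid \&_q(b_1,\dots,b_n)$ where $q$ is a quality guard, a Boolean predicate $[\![q]\!]$ (e.g. $[\![\forall]\!]$ = conjunction, $[\![\exists]\!]$ = disjunction); terms $t ::= c \mid y$. Input variables $x$ are bound by binders $c?x$; labels are unique. Translation: $T(\mathsf{0},\varphi)=\emptyset$; $T(!P,\varphi)=T(P,\varphi)$; $T(P_1\mid P_2,\varphi)=T(P_1,\varphi)\cup T(P_2,\varphi)$; $T((\nu c)P,\varphi)=T(P,\varphi)$; $T({^l}b.P,\varphi)=T(P,\varphi\wedge \mathsf{hp}(b))\cup\mathsf{th}(\varphi,b)\cup\{\varphi\leadsto\bar{l}\}$; $T({^l}\bar{c}\langle t\rangle.P,\varphi)=T(P,\varphi)\cup\{\varphi\leadsto\bar{c}\}\cup\{\varphi\leadsto\bar{l}\}$; $T({^l}\mathsf{case}\ x\ \mathsf{of}\ \mathsf{some}(y):P_1\ \mathsf{else}\ P_2,\varphi)=T(P_1,\varphi\wedge\bar{x})\cup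 T(P_2,\varphi\wedge\neg\bar{x})\cup\{\varphi\leadsto\bar{l}\}$; with $\mathsf{hp}(c?x)=\bar{c}$, $\mathsf{th}(\varphi,c?x)=\{(\varphi\wedge\bar{c})\leadsto\bar{x}\}$, $\mathsf{hp}(\&_q(b_1,\dots,b_n))=[\![q]\!](\mathsf{hp}(b_1),\dots,\mathsf{hp}(b_n))$, $\mathsf{th}(\varphi,\&_q(b_1,\dots,b_n))=\bigcup_i\mathsf{th}(\varphi,b_i)$. Here $\bar{c},\bar{x},\bar{l}$ are propositional literals for channels, input variables and labels. The set $T(P,\mathsf{tt})$ is normalised by replacing any two constraints $\varphi\leadsto\bar{p}$, $\varphi'\leadsto\bar{p}$ with the same consequent by $(\varphi\vee\varphi')\leadsto\bar{p}$. $P^l_{\Rightarrow}$ is the resulting normalised set with each $\leadsto$ read as propositional implication $\Rightarrow$. *)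

theory Defs
  imports Main
begin

text \<open>Type parameters: 'n channel names, 'x input variables (bound by binders c?x),
  'y data variables (bound by case), 'l labels.  A quality guard q is represented by
  its Boolean predicate [[q]] on the list of truth values of the sub-binders.\<close>

type_synonym qguard = "bool list \<Rightarrow> bool"

datatype ('n, 'x) qbinder =
    BIn 'n 'x
  | BQ qguard "('n, 'x) qbinder list"

datatype ('n, 'y) pterm = TName 'n | TVar 'y

datatype ('n, 'x, 'y, 'l) proc =
    PNil
  | PNu 'n "('n, 'x, 'y, 'l) proc"
  | PPar "('n, 'x, 'y, 'l) proc" "('n, 'x, 'y, 'l) proc"
  | PInp 'l "('n, 'x) qbinder" "('n, 'x, 'y, 'l) proc"
  | POut 'l 'n "('n, 'y) pterm" "('n, 'x, 'y, 'l) proc"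
  | PBang "('n, 'x, 'y, 'l) proc"
  | PCase 'l 'x 'y "('n, 'x, 'y, 'l) proc" "('n, 'x, 'y, 'l) proc"
      (* ^l case x of some(y): P1 else P2 *)

fun bvb :: "('n, 'x) qbinder \<Rightarrow> 'x list" where
  "bvb (BIn c x) = [x]"
| "bvb (BQ q bs) = concat (map bvb bs)"

fun fvt :: "('n, 'y) pterm \<Rightarrow> 'y set" where
  "fvt (TName c) = {}"
| "fvt (TVar y) = {y}"

fun fvx :: "('n, 'x, 'y, 'l) proc \<Rightarrow> 'x set" where
  "fvx PNil = {}"
| "fvx (PNu c P) = fvx P"
| "fvx (PPar P Q) = fvx P \<union> fvx Q"
| "fvx (PInp l b P) = fvx P - set (bvb b)"
| "fvx (POut l c t P) = fvx P"
| "fvx (PBang P) = fvx P"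
| "fvx (PCase l x y P1 P2) = {x} \<union> fvx P1 \<union> fvx P2"

fun fvy :: "('n, 'x, 'y, 'l) proc \<Rightarrow> 'y set" where
  "fvy PNil = {}"
| "fvy (PNu c P) = fvy P"
| "fvy (PPar P Q) = fvy P \<union> fvy Q"
| "fvy (PInp l b P) = fvy P"
| "fvy (POut l c t P) = fvt t \<union> fvy P"
| "fvy (PBang P) = fvy P"
| "fvy (PCase l x y P1 P2) = (fvy P1 - {y}) \<union> fvy P2"

definition closed :: "('n, 'x, 'y, 'l) proc \<Rightarrow> bool" where
  "closed P \<longleftrightarrow> fvx P = {} \<and> fvy P = {}"

fun bx :: "('n, 'x, 'y, 'l) proc \<Rightarrow> 'x list" where
  "bx PNil = []"
| "bx (PNu c P) = bx P"
| "bx (PPar P Q) = bx P @ bx Q"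
| "bx (PInp l b P) = bvb b @ bx P"
| "bx (POut l c t P) = bx P"
| "bx (PBang P) = bx P"
| "bx (PCase l x y P1 P2) = bx P1 @ bx P2"

fun bys :: "('n, 'x, 'y, 'l) proc \<Rightarrow> 'y list" where
  "bys PNil = []"
| "bys (PNu c P) = bys P"
| "bys (PPar P Q) = bys P @ bys Q"
| "bys (PInp l b P) = bys P"
| "bys (POut l c t P) = bys P"
| "bys (PBang P) = bys P"
| "bys (PCase l x y P1 P2) = y # bys P1 @ bys P2"

fun bn :: "('n, 'x, 'y, 'l) proc \<Rightarrow> 'n list" where
  "bn PNil = []"
| "bn (PNu c P) = c # bn P"
| "bn (PPar P Q) = bn P @ bn Q"
| "bn (PInp l b P) = bn P"
| "bn (POut l c t P) = bn P"
| "bn (PBang P) = bn P"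
| "bn (PCase l x y P1 P2) = bn P1 @ bn P2"

definition bound_once :: "('n, 'x, 'y, 'l) proc \<Rightarrow> bool" where
  "bound_once P \<longleftrightarrow> distinct (bx P) \<and> distinct (bys P) \<and> distinct (bn P)"

fun labels :: "('n, 'x, 'y, 'l) proc \<Rightarrow> 'l list" where
  "labels PNil = []"
| "labels (PNu c P) = labels P"
| "labels (PPar P Q) = labels P @ labels Q"
| "labels (PInp l b P) = l # labels P"
| "labels (POut l c t P) = l # labels P"
| "labels (PBang P) = labels P"
| "labels (PCase l x y P1 P2) = l # labels P1 @ labels P2"

fun input_vars :: "('n, 'x, 'y, 'l) proc \<Rightarrow> 'x set" where
  "input_vars PNil = {}"
| "input_vars (PNu c P) = input_vars P"
| "input_vars (PPar P Q) = input_vars P \<union> input_vars Q"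
| "input_vars (PInp l b P) = set (bvb b) \<union> input_vars P"
| "input_vars (POut l c t P) = input_vars P"
| "input_vars (PBang P) = input_vars P"
| "input_vars (PCase l x y P1 P2) = {x} \<union> input_vars P1 \<union> input_vars P2"

datatype ('n, 'x, 'l) lit = LC 'n | LX 'x | LL 'l

datatype ('n, 'x, 'l) form =
    FTrue
  | FFalse
  | FAtom "('n, 'x, 'l) lit"
  | FNot "('n, 'x, 'l) form"
  | FAnd "('n, 'x, 'l) form" "('n, 'x, 'l) form"
  | FOr "('n, 'x, 'l) form" "('n, 'x, 'l) form"
  | FImp "('n, 'x, 'l) form" "('n, 'x, 'l) form"
  | FQ qguard "('n, 'x, 'l) form list"

fun atoms :: "('n, 'x, 'l) form \<Rightarrow> ('n, 'x, 'l) lit set" where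
  "atoms FTrue = {}"
| "atoms FFalse = {}"
| "atoms (FAtom p) = {p}"
| "atoms (FNot f) = atoms f"
| "atoms (FAnd f g) = atoms f \<union> atoms g"
| "atoms (FOr f g) = atoms f \<union> atoms g"
| "atoms (FImp f g) = atoms f \<union> atoms g"
| "atoms (FQ q fs) = \<Union> (set (map atoms fs))"

fun hp :: "('n, 'x) qbinder \<Rightarrow> ('n, 'x, 'l) form" where
  "hp (BIn c x) = FAtom (LC c)"
| "hp (BQ q bs) = FQ q (map hp bs)"

fun th :: "('n, 'x, 'l) form \<Rightarrow> ('n, 'x) qbinder \<Rightarrow> (('n, 'x, 'l) form \<times> ('n, 'x, 'l) lit) list" where
  "th \<phi> (BIn c x) = [(FAnd \<phi> (FAtom (LC c)), LX x)]"
| "th \<phi> (BQ q bs) = concat (map (th \<phi>) bs)"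

text \<open>Constraints phi ~> p are pairs (phi, p).\<close>
fun trans :: "('n, 'x, 'y, 'l) proc \<Rightarrow> ('n, 'x, 'l) form \<Rightarrow> (('n, 'x, 'l) form \<times> ('n, 'x, 'l) lit) list" where
  "trans PNil \<phi> = []"
| "trans (PBang P) \<phi> = trans P \<phi>"
| "trans (PPar P Q) \<phi> = trans P \<phi> @ trans Q \<phi>"
| "trans (PNu c P) \<phi> = trans P \<phi>"
| "trans (PInp l b P) \<phi> = trans P (FAnd \<phi> (hp b)) @ th \<phi> b @ [(\<phi>, LL l)]"
| "trans (POut l c t P) \<phi> = trans P \<phi> @ [(\<phi>, LC c)] @ [(\<phi>, LL l)]"
| "trans (PCase l x y P1 P2) \<phi> =
     trans P1 (FAnd \<phi> (FAtom (LX x))) @ trans P2 (FAnd \<phi> (FNot (FAtom (LX x)))) @ [(\<phi>, LL l)]"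

fun disjs :: "('n, 'x, 'l) form list \<Rightarrow> ('n, 'x, 'l) form" where
  "disjs [] = FFalse"
| "disjs [f] = f"
| "disjs (f # fs) = FOr f (disjs fs)"

definition normalise :: "(('n, 'x, 'l) form \<times> ('n, 'x, 'l) lit) list \<Rightarrow> ('n, 'x, 'l) form set" where
  "normalise C = {FImp (disjs [fst c. c \<leftarrow> C, snd c = p]) (FAtom p) | p. p \<in> snd ` set C}"

text \<open>P^l_=> : the label l is not used bys the translation as given in the context.\<close>
definition impl_set :: "('n, 'x, 'y, 'l) proc \<Rightarrow> 'l \<Rightarrow> ('n, 'x, 'l) form set" where
  "impl_set P l = normalise (trans P FTrue)"

end

theory Submission
  imports Defs
begin

text \<open>The constraints of \<open>T(P, \<phi>)\<close> with consequent \<open>x\<close> are exactly those produced by \<open>th\<close>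
  at the binding occurrences of \<open>x\<close>; in a closed process whose variables are bound once there
  is exactly one of them, and normalisation leaves its antecedent unchanged. That antecedent
  is built from \<open>\<phi>\<close>, channel literals, the \<open>hp\<close> of enclosing binders and the literals of
  enclosing case scrutinees. None of these mentions \<open>x\<close>: a scrutinee \<open>x\<close> enclosing the
  binder of \<open>x\<close> would be a free occurrence or require a second binder of \<open>x\<close>.\<close>

lemma distinct_count_list: "distinct xs \<Longrightarrow> x \<in> set xs \<Longrightarrow> count_list xs x = 1"
  by (induction xs) auto

lemma LX_notin_atoms_hp: "LX x \<notin> atoms (hp b)"
  by (induction b) auto

lemma input_vars_subset: "input_vars P \<subseteq> set (bx P) \<union> fvx P"
  by (induction P) auto

lemma map_snd_th: "map snd (th \<phi> b) = map LX (bvb b)"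
  by (induction b) (simp_all add: map_concat cong: map_cong)

lemma th_antecedent: "(\<psi>, p) \<in> set (th \<phi> b) \<Longrightarrow> \<exists>c. \<psi> = FAnd \<phi> (FAtom (LC c))"
  by (induction b) auto

lemma length_filter_th:
  "length (filter (\<lambda>c. snd c = LX x) (th \<phi> b)) = count_list (bvb b) x"
proof -
  have "length (filter (\<lambda>c. snd c = LX x) (th \<phi> b))
      = length (filter ((=) (LX x)) (map snd (th \<phi> b)))"
    by (simp add: filter_map comp_def eq_commute)
  also have "\<dots> = count_list (bvb b) x"
    by (simp add: map_snd_th filter_map comp_def count_list_eq_length_filter)
  finally show ?thesis .
qed

lemma length_filter_trans:
  "length (filter (\<lambda>c. snd c = LX x) (trans P \<phi>)) = count_list (bx P) x"
  by (induction P arbitrary: \<phi>) (simp_all add: length_filter_th)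

lemma LX_consequent_trans_bound: "(\<psi>, LX x) \<in> set (trans P \<phi>) \<Longrightarrow> x \<in> set (bx P)"
  using length_filter_trans[of x P \<phi>] count_list_0_iff[of "bx P" x]
  by (metis (mono_tags, lifting) filter_empty_conv length_0_conv snd_conv)

lemma LX_notin_atoms_trans_antecedent:
  assumes "(\<psi>, LX x) \<in> set (trans P \<phi>)" and "distinct (bx P)" and "x \<notin> fvx P"
    and "LX x \<notin> atoms \<phi>"
  shows "LX x \<notin> atoms \<psi>"
  using assms
proof (induction P arbitrary: \<phi>)
  case (PInp l b P)
  consider "(\<psi>, LX x) \<in> set (trans P (FAnd \<phi> (hp b)))" | "(\<psi>, LX x) \<in> set (th \<phi> b)"
    using PInp.prems(1) by auto
  then show ?case
  proof cases
    case 1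
    from 1 have "x \<in> set (bx P)" by (rule LX_consequent_trans_bound)
    then have "x \<notin> set (bvb b)" using PInp.prems(2) by auto
    then have "x \<notin> fvx P" using PInp.prems(3) by simp
    moreover have "distinct (bx P)" using PInp.prems(2) by simp
    ultimately show ?thesis
      using PInp.IH[OF 1] PInp.prems(4) LX_notin_atoms_hp[of x b] by simp
  next
    case 2
    then show ?thesis using th_antecedent PInp.prems(4) by fastforce
  qed
next
  case (PCase l x' y P1 P2)
  then have "x' \<noteq> x" and dist: "distinct (bx P1)" "distinct (bx P2)"
    and free: "x \<notin> fvx P1" "x \<notin> fvx P2"
    by auto
  then have guards: "LX x \<notin> atoms (FAnd \<phi> (FAtom (LX x')))"
    "LX x \<notin> atoms (FAnd \<phi> (FNot (FAtom (LX x'))))"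
    using PCase.prems(4) by auto
  consider "(\<psi>, LX x) \<in> set (trans P1 (FAnd \<phi> (FAtom (LX x'))))"
    | "(\<psi>, LX x) \<in> set (trans P2 (FAnd \<phi> (FNot (FAtom (LX x')))))"
    using PCase.prems(1) by auto
  then show ?case
  proof cases
    case 1
    show ?thesis by (rule PCase.IH(1)[OF 1 dist(1) free(1) guards(1)])
  next
    case 2
    show ?thesis by (rule PCase.IH(2)[OF 2 dist(2) free(2) guards(2)])
  qed
qed auto

lemma FImp_mem_normalise_iff:
  "FImp \<phi> (FAtom p) \<in> normalise C
     \<longleftrightarrow> p \<in> snd ` set C \<and> \<phi> = disjs (map fst (filter (\<lambda>c. snd c = p) C))"
proof -
  have "[fst c. c \<leftarrow> C, snd c = p] = map fst (filter (\<lambda>c. snd c = p) C)" for p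
    by (induction C) auto
  then show ?thesis unfolding normalise_def by auto
qed

theorem lemmaB1:
  fixes P :: "('n, 'x, 'y, 'l) proc" and l :: 'l and x :: 'x
  assumes "closed P"
    and "bound_once P"
    and "distinct (labels P)"
    and "x \<in> input_vars P"
  shows "(\<exists>!\<phi>. FImp \<phi> (FAtom (LX x)) \<in> impl_set P l)
         \<and> (\<forall>\<phi>. FImp \<phi> (FAtom (LX x)) \<in> impl_set P l \<longrightarrow> LX x \<notin> atoms \<phi>)"
proof -
  have free: "fvx P = {}" and dist: "distinct (bx P)"
    using assms(1,2) by (simp_all add: closed_def bound_once_def)
  then have "x \<in> set (bx P)"
    using assms(4) input_vars_subset[of P] by auto
  then have "count_list (bx P) x = 1"
    using distinct_count_list[OF dist] by simp
  then obtain c where single: "filter (\<lambda>c. snd c = LX x) (trans P FTrue) = [c]"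
    using length_filter_trans[of x P FTrue] by (auto simp: length_Suc_conv)
  then have "c \<in> set (filter (\<lambda>c. snd c = LX x) (trans P FTrue))" by simp
  then have "c \<in> set (trans P FTrue)" and "snd c = LX x" by simp_all
  then obtain \<psi> where c: "c = (\<psi>, LX x)" and mem: "(\<psi>, LX x) \<in> set (trans P FTrue)"
    by (metis prod.collapse)
  have "LX x \<in> snd ` set (trans P FTrue)"
    using mem by force
  then have "FImp \<phi> (FAtom (LX x)) \<in> impl_set P l \<longleftrightarrow> \<phi> = \<psi>" for \<phi>
    unfolding impl_set_def FImp_mem_normalise_iff single c by simp
  moreover have "LX x \<notin> atoms \<psi>"
    using LX_notin_atoms_trans_antecedent[OF mem dist] free by simp
  ultimately show ?thesis by auto
qed

end
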